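(* Let $r\ge1$ be an integer and, for integers $m\ge0$, let $S_{r,m}=\sum_{k=0}^{m}J_{rk}^{(3)}$. Define the $4\times4$ matrices $$A_{r}=\begin{pmatrix} 1&0&0&0\\ 1&2^{r}+\epsilon_{r}&-(2^{r}\epsilon_{r}+1)&2^{r}\\0&1&0&0\\ 0&0&1&0 \end{pmatrix},\quad Q_{r,n}=\begin{pmatrix} J_{r}^{(3)}+2^{r}J_{-r}^{(3)}&0&0&0\\ S_{r,n}&J_{r(n+1)}^{(3)}&K_{r,n}^{(3)}&2^{r}J_{rn}^{(3)}\\S_{r,n-1}&J_{rn}^{(3)}&K_{r,n-1}^{(3)}&2^{r}J_{r(n-1)}^{(3)}\\ S_{r,n-2}&J_{r(n-1)}^{(3)}&K_{r,n-2}^{(3)}&2^{r}J_{r(n-2)}^{(3)} \end{pmatrix},$$ where $K_{r,m}^{(3)}=-(2^{r}\epsilon_{r}+1)J_{rm}^{(3)}+2^{r}J_{r(m-1)}^{(3)}$. Then for every integer $n\ge2$, $$J_{r}^{(3)}A_{r}^{n}+2^{r}J_{-r}^{(3)}A_{r}^{n-1}=Q_{r,n}.$$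
   Context: The third order Jacobsthal numbers are defined by $J_0^{(3)}=0$, $J_1^{(3)}=J_2^{(3)}=1$ and $J_{n+3}^{(3)}=J_{n+2}^{(3)}+J_{n+1}^{(3)}+2J_n^{(3)}$ for $n\ge0$, and are extended to all negative indices by running the recurrence backwards, i.e. $J_{n}^{(3)}=\tfrac12\big(J_{n+3}^{(3)}-J_{n+2}^{(3)}-J_{n+1}^{(3)}\big)$ for all $n<0$ (so $J_{-1}^{(3)}=0$, $J_{-2}^{(3)}=\tfrac12$, $J_{-3}^{(3)}=-\tfrac14$). Let $\omega_1=\frac{-1+\sqrt{-3}}{2}$, $\omega_2=\frac{-1-\sqrt{-3}}{2}$ be the roots of $x^2+x+1=0$ and $\epsilon_r=\omega_1^r+\omega_2^r$ (equal to $2$ if $3\mid r$, and $-1$ otherwise). *)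

theory Defs
  imports Complex_Main "Jordan_Normal_Form.Matrix"
begin

function J3 :: "int \<Rightarrow> real" where
  "J3 n = (if n = 0 then 0
           else if n = 1 \<or> n = 2 then 1
           else if n \<ge> 3 then J3 (n - 1) + J3 (n - 2) + 2 * J3 (n - 3)
           else (J3 (n + 3) - J3 (n + 2) - J3 (n + 1)) / 2)"
  by auto
termination
  by (relation "measure (\<lambda>n. if n \<ge> 0 then nat (2 * n) else nat (10 - 2 * n))") auto

declare J3.simps [simp del]

definition omega1 :: complex where "omega1 = (-1 + \<i> * sqrt 3) / 2"
definition omega2 :: complex where "omega2 = (-1 - \<i> * sqrt 3) / 2"

definition eps :: "nat \<Rightarrow> complex" where "eps r = omega1 ^ r + omega2 ^ r"

text \<open>Matrix entries are complex (epsilon is defined as a complex number);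
  J values are embedded via of_real.\<close>
definition Jc :: "int \<Rightarrow> complex" where "Jc k = of_real (J3 k)"

definition S :: "nat \<Rightarrow> nat \<Rightarrow> complex" where
  "S r m = (\<Sum>k = 0..m. Jc (int r * int k))"

definition K :: "nat \<Rightarrow> int \<Rightarrow> complex" where
  "K r m = - (2 ^ r * eps r + 1) * Jc (int r * m) + 2 ^ r * Jc (int r * (m - 1))"

definition A_mat :: "nat \<Rightarrow> complex mat" where
  "A_mat r = mat_of_rows_list 4
     [[1, 0, 0, 0],
      [1, 2 ^ r + eps r, - (2 ^ r * eps r + 1), 2 ^ r],
      [0, 1, 0, 0],
      [0, 0, 1, 0]]"

definition Q_mat :: "nat \<Rightarrow> nat \<Rightarrow> complex mat" where
  "Q_mat r n = mat_of_rows_list 4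
     [[Jc (int r) + 2 ^ r * Jc (- int r), 0, 0, 0],
      [S r n, Jc (int r * (int n + 1)), K r (int n), 2 ^ r * Jc (int r * int n)],
      [S r (n - 1), Jc (int r * int n), K r (int n - 1), 2 ^ r * Jc (int r * (int n - 1))],
      [S r (n - 2), Jc (int r * (int n - 1)), K r (int n - 2), 2 ^ r * Jc (int r * (int n - 2))]]"

end

theory Submission
  imports Defs
begin

text \<open>Since \<open>x\<^sup>3 - x\<^sup>2 - x - 2 = (x - 2)(x\<^sup>2 + x + 1)\<close>, one has
  \<open>7 J\<^sub>k = 2\<^sup>k\<^sup>+\<^sup>1 - V\<^sub>k\<close> with \<open>V\<close> of period 3 (values 2, -3, 1) and zero sum over a period.
  Consequently \<open>m \<mapsto> J\<^sub>r\<^sub>m\<close> satisfies the linear recurrence with characteristic polynomial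
  \<open>(x - 2\<^sup>r)(x\<^sup>2 - \<epsilon>\<^sub>r x + 1)\<close>, whose companion matrix is the lower right 3x3 block of \<open>A\<^sub>r\<close>,
  while the first column of \<open>A\<^sub>r\<close> accumulates the partial sums \<open>S\<^sub>r\<^sub>,\<^sub>n\<close>.
  Hence \<open>Q\<^sub>r\<^sub>,\<^sub>n A\<^sub>r = Q\<^sub>r\<^sub>,\<^sub>n\<^sub>+\<^sub>1\<close>, and the identity follows by induction from \<open>n = 1\<close>.\<close>

definition J3_periodic :: "int \<Rightarrow> real" where
  "J3_periodic k = (if k mod 3 = 0 then 2 else if k mod 3 = 1 then -3 else 1)"

lemma J3_periodic_add_mult_three: "J3_periodic (k + 3 * j) = J3_periodic k"
  unfolding J3_periodic_def by simp

lemma J3_periodic_sum_consecutive: "J3_periodic k + J3_periodic (k + 1) + J3_periodic (k + 2) = 0"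
proof -
  have "k mod 3 = 0 \<or> k mod 3 = 1 \<or> k mod 3 = 2" by arith
  then consider "k mod 3 = 0" | "k mod 3 = 1" | "k mod 3 = 2" by blast
  then show ?thesis
  proof cases
    case 1
    then have "(k + 1) mod 3 = 1" "(k + 2) mod 3 = 2" by presburger+
    with 1 show ?thesis unfolding J3_periodic_def by simp
  next
    case 2
    then have "(k + 1) mod 3 = 2" "(k + 2) mod 3 = 0" by presburger+
    with 2 show ?thesis unfolding J3_periodic_def by simp
  next
    case 3
    then have "(k + 1) mod 3 = 0" "(k + 2) mod 3 = 1" by presburger+
    with 3 show ?thesis unfolding J3_periodic_def by simp
  qed
qed

lemma J3_closed_form: "J3 k = (2 * 2 powi k - J3_periodic k) / 7"
proof (induction k rule: J3.induct)
  case (1 n)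
  have pow_shift: "(2::real) powi (m + int j) = 2 powi m * 2 ^ j" for m j
    by (simp add: power_int_add flip: power_int_of_nat)
  consider "n = 0" | "n = 1" | "n = 2" | "n \<ge> 3" | "n < 0" by linarith
  then show ?case
  proof cases
    case 4
    then have "J3 n = J3 (n - 1) + J3 (n - 2) + 2 * J3 (n - 3)" by (subst J3.simps) simp
    moreover have "J3_periodic n = J3_periodic (n - 3)"
      using J3_periodic_add_mult_three[of "n - 3" 1] by simp
    moreover have "J3_periodic (n - 3) + J3_periodic (n - 2) + J3_periodic (n - 1) = 0"
      using J3_periodic_sum_consecutive[of "n - 3"] by (simp add: algebra_simps)
    moreover have "(2::real) powi n = 2 powi (n - 3) * 8" "(2::real) powi (n - 1) = 2 powi (n - 3) * 4"
      "(2::real) powi (n - 2) = 2 powi (n - 3) * 2"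
      using pow_shift[of "n - 3" 3] pow_shift[of "n - 3" 2] pow_shift[of "n - 3" 1] by simp_all
    ultimately show ?thesis using 1(1-3) 4 by (simp add: field_simps)
  next
    case 5
    then have "J3 n = (J3 (n + 3) - J3 (n + 2) - J3 (n + 1)) / 2" by (subst J3.simps) simp
    moreover have "J3_periodic (n + 3) = J3_periodic n"
      using J3_periodic_add_mult_three[of n 1] by simp
    moreover have "(2::real) powi (n + 3) = 2 powi n * 8" "(2::real) powi (n + 2) = 2 powi n * 4"
      "(2::real) powi (n + 1) = 2 powi n * 2"
      using pow_shift[of n 3] pow_shift[of n 2] pow_shift[of n 1] by simp_all
    ultimately show ?thesis using 1(4-6) 5 J3_periodic_sum_consecutive[of n] by (simp add: field_simps)
  qed (subst J3.simps, simp add: J3_periodic_def)+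
qed

lemma J3_periodic_mult_three_dvd:
  assumes "(3::int) dvd a" shows "J3_periodic (a * k) = 2"
  using assms unfolding J3_periodic_def by auto

lemma J3_periodic_mult_sum_consecutive:
  assumes "\<not> (3::int) dvd a"
  shows "J3_periodic (a * m) + J3_periodic (a * (m + 1)) + J3_periodic (a * (m + 2)) = 0"
proof -
  have "a mod 3 = 1 \<or> a mod 3 = 2" using assms by arith
  then consider j where "a = 3 * j + 1" | j where "a = 3 * j + 2"
    by (metis add.commute mult.commute mult_div_mod_eq)
  then show ?thesis
  proof cases
    case (1 j)
    then have "a * (m + 1) = a * m + 1 + 3 * j" "a * (m + 2) = a * m + 2 + 3 * (2 * j)"
      by (simp_all add: algebra_simps)
    then show ?thesis
      using J3_periodic_sum_consecutive[of "a * m"] by (simp only: J3_periodic_add_mult_three)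
  next
    case (2 j)
    then have "a * (m + 1) = a * m + 2 + 3 * j" "a * (m + 2) = a * m + 1 + 3 * (2 * j + 1)"
      by (simp_all add: algebra_simps)
    then show ?thesis
      using J3_periodic_sum_consecutive[of "a * m"] by (simp only: J3_periodic_add_mult_three)
  qed
qed

definition eps_real :: "nat \<Rightarrow> real" where "eps_real r = (if 3 dvd r then 2 else -1)"

lemma J3_periodic_mult_rec:
  "J3_periodic (int r * (m + 3)) = (2 ^ r + eps_real r) * J3_periodic (int r * (m + 2))
     - (2 ^ r * eps_real r + 1) * J3_periodic (int r * (m + 1)) + 2 ^ r * J3_periodic (int r * m)"
proof (cases "3 dvd r")
  case True
  then have "J3_periodic (int r * k) = 2" for k
    by (intro J3_periodic_mult_three_dvd) presburger
  with True show ?thesis by (simp only: eps_real_def if_True) (simp add: algebra_simps)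
next
  case False
  let ?V = "\<lambda>j. J3_periodic (int r * (m + j))"
  have "\<not> (3::int) dvd int r" using False by presburger
  then have sum: "?V 0 + ?V 1 + ?V 2 = 0"
    using J3_periodic_mult_sum_consecutive by simp
  have "?V 3 = ?V 0"
    using J3_periodic_add_mult_three[of "int r * m" "int r"] by (simp add: algebra_simps)
  also have "\<dots> = 2 ^ r * (?V 0 + ?V 1 + ?V 2) - ?V 1 - ?V 2"
    using sum by simp
  also have "\<dots> = (2 ^ r + eps_real r) * ?V 2 - (2 ^ r * eps_real r + 1) * ?V 1 + 2 ^ r * ?V 0"
    using False by (simp add: eps_real_def algebra_simps)
  finally show ?thesis by simp
qed

lemma powi_mult_rec:
  fixes e :: real
  shows "2 powi (int r * (m + 3)) = (2 ^ r + e) * 2 powi (int r * (m + 2))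
     - (2 ^ r * e + 1) * 2 powi (int r * (m + 1)) + 2 ^ r * 2 powi (int r * m)"
proof -
  have shift: "(2::real) powi (int r * (m + int j)) = 2 powi (int r * m) * (2 ^ r) ^ j" for j
  proof -
    have "(2::real) powi (int r * (m + int j)) = 2 powi (int r * m) * 2 powi int (r * j)"
      by (simp add: power_int_add algebra_simps)
    then show ?thesis by (simp only: power_int_of_nat power_mult)
  qed
  show ?thesis
    using shift[of 3] shift[of 2] shift[of 1] by (simp add: algebra_simps power3_eq_cube power2_eq_square)
qed

lemma J3_mult_rec:
  "J3 (int r * (m + 3)) = (2 ^ r + eps_real r) * J3 (int r * (m + 2))
     - (2 ^ r * eps_real r + 1) * J3 (int r * (m + 1)) + 2 ^ r * J3 (int r * m)"
  unfolding J3_closed_form powi_mult_rec[of r m "eps_real r"] J3_periodic_mult_rec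
  by (simp add: field_simps)

lemma omega_cube: "omega1 ^ 3 = 1" "omega2 ^ 3 = 1"
  by (simp_all add: omega1_def omega2_def power3_eq_cube field_simps complex_eq_iff)

lemma omega_sum: "omega1 + omega2 = -1" and omega_square_sum: "omega1 ^ 2 + omega2 ^ 2 = -1"
  by (simp_all add: omega1_def omega2_def power2_eq_square field_simps complex_eq_iff)

lemma eps_eq_eps_real: "eps r = of_real (eps_real r)"
proof -
  have "omega ^ r = omega ^ (r mod 3)" if "omega ^ 3 = 1" for omega :: complex
    by (metis div_mult_mod_eq mult.commute power_add power_mult power_one that mult_1)
  then have "eps r = omega1 ^ (r mod 3) + omega2 ^ (r mod 3)"
    unfolding eps_def using omega_cube by simp
  moreover have "r mod 3 = 0 \<or> r mod 3 = 1 \<or> r mod 3 = 2" by arith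
  ultimately show ?thesis
    using omega_sum omega_square_sum by (auto simp: eps_real_def dvd_eq_mod_eq_0)
qed

lemma Jc_mult_rec:
  "Jc (int r * (m + 1)) = (2 ^ r + eps r) * Jc (int r * m) + K r (m - 1)"
  using arg_cong[OF J3_mult_rec[of r "m - 2"], of complex_of_real]
  unfolding K_def Jc_def eps_eq_eps_real by (simp add: algebra_simps)

lemma A_mat_carrier: "A_mat r \<in> carrier_mat 4 4"
  unfolding A_mat_def mat_of_rows_list_def carrier_mat_def by (simp add: numeral_eq_Suc)

lemma add_smult_mult_distrib_mat:
  fixes X Y A :: "'a :: comm_semiring_0 mat"
  assumes "X \<in> carrier_mat d d" "Y \<in> carrier_mat d d" "A \<in> carrier_mat d d"
  shows "(a \<cdot>\<^sub>m X + b \<cdot>\<^sub>m Y) * A = a \<cdot>\<^sub>m (X * A) + b \<cdot>\<^sub>m (Y * A)"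
  using assms by (simp add: add_mult_distrib_mat[of _ d d] mult_smult_assoc_mat[OF assms(1,3)]
      mult_smult_assoc_mat[OF assms(2,3)])

lemma less_4_cases: "(i::nat) < 4 \<Longrightarrow> i = 0 \<or> i = 1 \<or> i = 2 \<or> i = 3" by arith

lemma mat_of_rows_list_mult_A_mat:
  "mat_of_rows_list 4 [[p0,p1,p2,p3],[q0,q1,q2,q3],[u0,u1,u2,u3],[w0,w1,w2,w3]] * A_mat r =
   mat_of_rows_list 4 [[p0+p1, (2^r+eps r)*p1+p2, -(2^r*eps r+1)*p1+p3, 2^r*p1],
                       [q0+q1, (2^r+eps r)*q1+q2, -(2^r*eps r+1)*q1+q3, 2^r*q1],
                       [u0+u1, (2^r+eps r)*u1+u2, -(2^r*eps r+1)*u1+u3, 2^r*u1],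
                       [w0+w1, (2^r+eps r)*w1+w2, -(2^r*eps r+1)*w1+w3, 2^r*w1]]"
  (is "?L = ?R")
proof (rule eq_matI)
  fix i j assume "i < dim_row ?R" and "j < dim_col ?R"
  then have "i < 4" and "j < 4" by (simp_all add: mat_of_rows_list_def)
  have sum4: "(\<Sum>k = 0..<4. f k) = f 0 + f 1 + f 2 + f (3::nat)" for f :: "nat \<Rightarrow> complex"
    by (simp add: numeral_eq_Suc)
  show "?L $$ (i, j) = ?R $$ (i, j)"
    using less_4_cases[OF \<open>i < 4\<close>] less_4_cases[OF \<open>j < 4\<close>]
    by (elim disjE) (simp_all add: A_mat_def mat_of_rows_list_def scalar_prod_def sum4 row_def col_def)
qed (simp_all add: A_mat_def mat_of_rows_list_def)

definition Q_row :: "nat \<Rightarrow> complex \<Rightarrow> int \<Rightarrow> complex list" where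
  "Q_row r s m = [s, Jc (int r * (m + 1)), K r m, 2 ^ r * Jc (int r * m)]"

lemma Q_mat_eq_Q_rows:
  "Q_mat r n = mat_of_rows_list 4 [[Jc (int r) + 2 ^ r * Jc (- int r), 0, 0, 0],
     Q_row r (S r n) (int n), Q_row r (S r (n - 1)) (int n - 1), Q_row r (S r (n - 2)) (int n - 2)]"
  unfolding Q_mat_def Q_row_def by simp

lemma Q_row_mult_A_mat:
  "[s + Jc (int r * (m + 1)), (2 ^ r + eps r) * Jc (int r * (m + 1)) + K r m,
    - (2 ^ r * eps r + 1) * Jc (int r * (m + 1)) + 2 ^ r * Jc (int r * m), 2 ^ r * Jc (int r * (m + 1))]
   = Q_row r (s + Jc (int r * (m + 1))) (m + 1)"
  unfolding Q_row_def K_def[of r "m + 1"] Jc_mult_rec[of r "m + 1"] by simp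

lemma S_Suc: "S r (Suc k) = S r k + Jc (int r * int (Suc k))"
  unfolding S_def by simp

lemma Q_mat_mult_A_mat:
  assumes "n \<ge> 1" shows "Q_mat r n * A_mat r = Q_mat r (Suc n)"
proof -
  have "S r (n - i) + Jc (int r * (int n - int i + 1)) = S r (Suc n - i)" if "i \<le> 2" for i
  proof (cases "i \<le> n")
    case True
    then have "Suc n - i = Suc (n - i)" "int n - int i + 1 = int (Suc (n - i))" by simp_all
    then show ?thesis by (simp only: S_Suc)
  next
    case False
    \<comment> \<open>\<open>n = 1\<close>: the truncated \<open>S r (1 - 2) = S r 0 = J\<^sub>0 = 0\<close> is still the empty sum\<close>
    then have "n = 1" "i = 2" using assms that by simp_all
    then show ?thesis by (simp add: Jc_def J3.simps[of 0])
  qed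
  note S_step = this[of 0] this[of 1] this[of 2]
  have "Q_mat r n * A_mat r = mat_of_rows_list 4 [[Jc (int r) + 2 ^ r * Jc (- int r), 0, 0, 0],
     Q_row r (S r n + Jc (int r * (int n + 1))) (int n + 1),
     Q_row r (S r (n - 1) + Jc (int r * (int n - 1 + 1))) (int n - 1 + 1),
     Q_row r (S r (n - 2) + Jc (int r * (int n - 2 + 1))) (int n - 2 + 1)]"
    unfolding Q_mat_eq_Q_rows[of r n] Q_row_def[of r "S r _"] mat_of_rows_list_mult_A_mat
      Q_row_mult_A_mat by simp
  also have "\<dots> = Q_mat r (Suc n)"
    unfolding Q_mat_eq_Q_rows[of r "Suc n"] using S_step by (simp add: algebra_simps)
  finally show ?thesis .
qed

lemma Q_mat_one:
  "Jc (int r) \<cdot>\<^sub>m A_mat r + (2 ^ r * Jc (- int r)) \<cdot>\<^sub>m 1\<^sub>m 4 = Q_mat r 1"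
  (is "?L = ?R")
proof (rule eq_matI)
  have J0: "Jc 0 = 0" by (simp add: Jc_def J3.simps[of 0])
  have J2: "Jc (int r * 2) = (2 ^ r + eps r) * Jc (int r) + 2 ^ r * Jc (- int r)"
    using Jc_mult_rec[of r 1] by (simp add: K_def J0)
  have J1: "Jc (int r) = K r (-1)"
    using Jc_mult_rec[of r 0] by (simp add: J0)
  fix i j assume "i < dim_row ?R" and "j < dim_col ?R"
  then have "i < 4" and "j < 4" by (simp_all add: Q_mat_def mat_of_rows_list_def)
  show "?L $$ (i, j) = ?R $$ (i, j)"
    using less_4_cases[OF \<open>i < 4\<close>] less_4_cases[OF \<open>j < 4\<close>] \<open>i < 4\<close> \<open>j < 4\<close>
    by (elim disjE)
      (simp_all add: A_mat_def Q_mat_def mat_of_rows_list_def S_def K_def J0 J1 J2 algebra_simps)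
qed (simp_all add: A_mat_def Q_mat_def mat_of_rows_list_def)

lemma smult_pow_add_smult_pow_eq_Q_mat:
  "Jc (int r) \<cdot>\<^sub>m (A_mat r ^\<^sub>m Suc k) + (2 ^ r * Jc (- int r)) \<cdot>\<^sub>m (A_mat r ^\<^sub>m k)
     = Q_mat r (Suc k)"
proof (induction k)
  case 0
  show ?case using Q_mat_one carrier_matD(1)[OF A_mat_carrier, of r] by simp
next
  case (Suc k)
  let ?a = "Jc (int r)" and ?b = "2 ^ r * Jc (- int r)"
  have "Q_mat r (Suc (Suc k)) = Q_mat r (Suc k) * A_mat r"
    using Q_mat_mult_A_mat[of "Suc k" r] by simp
  also have "\<dots> = (?a \<cdot>\<^sub>m (A_mat r ^\<^sub>m Suc k) + ?b \<cdot>\<^sub>m (A_mat r ^\<^sub>m k)) * A_mat r"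
    using Suc.IH by simp
  also have "\<dots> = ?a \<cdot>\<^sub>m (A_mat r ^\<^sub>m Suc k * A_mat r) + ?b \<cdot>\<^sub>m (A_mat r ^\<^sub>m k * A_mat r)"
    using A_mat_carrier[of r] by (intro add_smult_mult_distrib_mat pow_carrier_mat)
  finally show ?case by simp
qed

theorem theorem1:
  fixes r n :: nat
  assumes "r \<ge> 1" and "n \<ge> 2"
  shows "Jc (int r) \<cdot>\<^sub>m (A_mat r ^\<^sub>m n)
           + (2 ^ r * Jc (- int r)) \<cdot>\<^sub>m (A_mat r ^\<^sub>m (n - 1)) = Q_mat r n"
  using smult_pow_add_smult_pow_eq_Q_mat[of r "n - 1"] assms(2) by simp

end
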